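(* Every drawable subset of $\mathbb{R}^2$ is a Borel set.
   Context: For $A\subseteq\mathbb{R}^2$ let $N(A)=\{x\in\mathbb{R}^2: |x-a|<1 \text{ for some } a\in A\}$. Let $\mathcal{D}_1=\{N(A_1): A_1\subseteq\mathbb{R}^2\}$ and for $n\ge 2$ let $\mathcal{D}_n=\{D\cup N(A_n): D\in\mathcal{D}_{n-1}, A_n\subseteq\mathbb{R}^2\}$ if $n$ is odd and $\mathcal{D}_n=\{D\setminus N(A_n): D\in\mathcal{D}_{n-1}, A_n\subseteq\mathbb{R}^2\}$ if $n$ is even. A set is drawable if it lies in $\mathcal{D}=\bigcup_{n\ge1}\mathcal{D}_n$. *)

theory Defs
  imports "HOL-Analysis.Analysis"
begin

definition N :: "(real^2) set \<Rightarrow> (real^2) set" where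
  "N A = {x. \<exists>a\<in>A. dist x a < 1}"

fun Dn :: "nat \<Rightarrow> (real^2) set set" where
  "Dn 0 = {}"
| "Dn (Suc 0) = {N A1 | A1. True}"
| "Dn (Suc (Suc k)) =
     (if odd (Suc (Suc k))
      then {D \<union> N An | D An. D \<in> Dn (Suc k)}
      else {D - N An | D An. D \<in> Dn (Suc k)})"

definition drawable :: "(real^2) set \<Rightarrow> bool" where
  "drawable S \<longleftrightarrow> (\<exists>n\<ge>1. S \<in> Dn n)"

end

theory Submission
  imports Defs
begin

lemma N_eq_UN_ball: "N A = (\<Union>a\<in>A. ball a 1)"
  by (auto simp: N_def ball_def dist_commute)

lemma open_N: "open (N A)"
  by (simp add: N_eq_UN_ball open_UN)

lemma N_in_borel: "N A \<in> sets borel"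
  by (rule borel_open[OF open_N])

lemma Dn_subset_borel: "Dn n \<subseteq> sets borel"
proof (induction n rule: Dn.induct)
  case 1
  then show ?case by simp
next
  case 2
  then show ?case using N_in_borel by auto
next
  case (3 k)
  then show ?case using N_in_borel by (auto split: if_splits)
qed

theorem theorem2p2:
  fixes S :: "(real^2) set"
  assumes "drawable S"
  shows "S \<in> sets borel"
  using assms Dn_subset_borel unfolding drawable_def by blast

end
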